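(* Let $G=([n],E)$ be a persistent graph and let $a,b,c$ be vertices such that $b<c$, $\{b,c\} \subseteq N(a)$, and there is no vertex $x \in N[a]$ with $b < x < c$. Then $\{b,c\} \in E$.
   Context: $[n]=\{1,\dots,n\}$. A graph $G=([n],E)$ is persistent if (1) it contains the Hamilton path $1,2,\dots,n$, i.e. $\{i,i+1\}\in E$ for all $1\le i<n$; (2) (X-property) if $\{a,c\}\in E$ and $\{b,d\}\in E$ for vertices $a<b<c<d$, then $\{a,d\}\in E$; (3) (bar-property) for every edge $\{a,b\}\in E$ with $a<b-1$ there is a vertex $x$ with $a<x<b$ such that $\{a,x\}\in E$ and $\{x,b\}\in E$. $N(v)$ denotes the set of neighbors of $v$ and $N[v]=N(v)\cup\{v\}$. *)

theory Defs
  imports Main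
begin

definition simple_graph_on :: "nat \<Rightarrow> nat set set \<Rightarrow> bool" where
  "simple_graph_on n E \<longleftrightarrow>
     (\<forall>e\<in>E. \<exists>u v. e = {u, v} \<and> u \<noteq> v \<and> u \<in> {1..n} \<and> v \<in> {1..n})"

definition persistent :: "nat \<Rightarrow> nat set set \<Rightarrow> bool" where
  "persistent n E \<longleftrightarrow>
     simple_graph_on n E \<and>
     (\<forall>i. 1 \<le> i \<and> i < n \<longrightarrow> {i, i + 1} \<in> E) \<and>
     (\<forall>a b c d. a \<in> {1..n} \<and> b \<in> {1..n} \<and> c \<in> {1..n} \<and> d \<in> {1..n} \<and>
        a < b \<and> b < c \<and> c < d \<and> {a, c} \<in> E \<and> {b, d} \<in> E \<longrightarrow> {a, d} \<in> E) \<and>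
     (\<forall>a b. {a, b} \<in> E \<and> a < b - 1 \<longrightarrow>
        (\<exists>x. a < x \<and> x < b \<and> {a, x} \<in> E \<and> {x, b} \<in> E))"

definition nbhd :: "nat set set \<Rightarrow> nat \<Rightarrow> nat set" where
  "nbhd E v = {u. {v, u} \<in> E}"

definition closed_nbhd :: "nat set set \<Rightarrow> nat \<Rightarrow> nat set" where
  "closed_nbhd E v = insert v (nbhd E v)"

end

theory Submission
  imports Defs
begin

text \<open>Say \<open>a < b < c\<close>; the case \<open>c < a\<close> is the mirror image. Let \<open>y\<close> be the last vertex
  in \<open>[a, b)\<close> adjacent to \<open>c\<close>. The bar-property gives a common neighbour \<open>z\<close> of \<open>y\<close> and \<open>c\<close>
  in \<open>(y, c)\<close>. Maximality of \<open>y\<close> rules out \<open>z < b\<close>, and \<open>z > b\<close> is impossible as well,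
  because then \<open>z\<close> would be a neighbour of \<open>a\<close> (directly if \<open>y = a\<close>, by the X-property
  applied to \<open>a < y < b < z\<close> otherwise) lying strictly between \<open>b\<close> and \<open>c\<close>. Hence \<open>z = b\<close>.\<close>

context linorder
begin

lemma edge_across_neighbourhood_gap:
  fixes E :: "'a set set"
  assumes finite: "finite (\<Union>E)"
    and X: "\<And>p q r s. p < q \<Longrightarrow> q < r \<Longrightarrow> r < s \<Longrightarrow>
      {p, r} \<in> E \<Longrightarrow> {q, s} \<in> E \<Longrightarrow> {p, s} \<in> E"
    and bar: "\<And>u v w. {u, v} \<in> E \<Longrightarrow> u < w \<Longrightarrow> w < v \<Longrightarrow>
      \<exists>x. u < x \<and> x < v \<and> {u, x} \<in> E \<and> {x, v} \<in> E"
    and "a < b" "b < c" and ab: "{a, b} \<in> E" and ac: "{a, c} \<in> E"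
    and gap: "\<nexists>x. {a, x} \<in> E \<and> b < x \<and> x < c"
  shows "{b, c} \<in> E"
proof -
  define S where "S = {y. a \<le> y \<and> y < b \<and> {y, c} \<in> E}"
  have "finite S"
    by (rule finite_subset[OF _ finite]) (auto simp: S_def)
  moreover have "a \<in> S"
    using \<open>a < b\<close> ac by (simp add: S_def)
  ultimately obtain y where "y \<in> S" and y_max: "\<And>w. w \<in> S \<Longrightarrow> y \<le> w \<Longrightarrow> w = y"
    using finite_has_maximal[of S] by blast
  then have "a \<le> y" "y < b" "{y, c} \<in> E"
    by (simp_all add: S_def)
  then obtain z where "y < z" "z < c" "{y, z} \<in> E" "{z, c} \<in> E"
    using bar[OF \<open>{y, c} \<in> E\<close> \<open>y < b\<close> \<open>b < c\<close>] by blast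
  consider "z < b" | "z = b" | "b < z"
    using less_linear by blast
  then show ?thesis
  proof cases
    case 1
    with \<open>a \<le> y\<close> \<open>y < z\<close> \<open>{z, c} \<in> E\<close> have "z \<in> S"
      by (simp add: S_def)
    with y_max \<open>y < z\<close> show ?thesis
      by fastforce
  next
    case 2
    with \<open>{z, c} \<in> E\<close> show ?thesis
      by simp
  next
    case 3
    have "{a, z} \<in> E"
    proof (cases "a = y")
      case True
      with \<open>{y, z} \<in> E\<close> show ?thesis
        by simp
    next
      case False
      with \<open>a \<le> y\<close> have "a < y"
        by simp
      from X[OF this \<open>y < b\<close> 3 ab \<open>{y, z} \<in> E\<close>] show ?thesis .
    qed
    with gap 3 \<open>z < c\<close> show ?thesis
      by blast
  qed
qed

end

lemma persistent_edge_in_range: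
  assumes "persistent n E" "{u, v} \<in> E"
  shows "u \<in> {1..n}" "v \<in> {1..n}" "u \<noteq> v"
proof -
  from assms obtain p q where "{u, v} = {p, q}" "p \<noteq> q" "p \<in> {1..n}" "q \<in> {1..n}"
    unfolding persistent_def simple_graph_on_def by blast
  then show "u \<in> {1..n}" "v \<in> {1..n}" "u \<noteq> v"
    by (auto simp: doubleton_eq_iff)
qed

lemma persistent_finite_vertices:
  assumes "persistent n E"
  shows "finite (\<Union>E)"
proof (rule finite_subset)
  show "\<Union>E \<subseteq> {1..n}"
  proof
    fix v assume "v \<in> \<Union>E"
    then obtain e where "e \<in> E" "v \<in> e" by blast
    with assms show "v \<in> {1..n}"
      unfolding persistent_def simple_graph_on_def by fastforce
  qed
qed simp

lemma persistent_X:
  assumes "persistent n E" "p < q" "q < r" "r < s" "{p, r} \<in> E" "{q, s} \<in> E"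
  shows "{p, s} \<in> E"
proof -
  have "p \<in> {1..n}" "r \<in> {1..n}" "q \<in> {1..n}" "s \<in> {1..n}"
    using persistent_edge_in_range assms(1,5,6) by blast+
  with assms show ?thesis
    unfolding persistent_def by blast
qed

lemma persistent_bar:
  assumes "persistent n E" "{u, v} \<in> E" "u < w" "w < v"
  shows "\<exists>x. u < x \<and> x < v \<and> {u, x} \<in> E \<and> {x, v} \<in> E"
proof -
  have "u < v - 1"
    using assms(3,4) by linarith
  with assms(1,2) show ?thesis
    unfolding persistent_def by blast
qed

theorem lemma5:
  fixes n a b c :: nat and E :: "nat set set"
  assumes "persistent n E"
    and "a \<in> {1..n}" and "b \<in> {1..n}" and "c \<in> {1..n}"
    and "b < c"
    and "{b, c} \<subseteq> nbhd E a"
    and "\<not> (\<exists>x \<in> closed_nbhd E a. b < x \<and> x < c)"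
  shows "{b, c} \<in> E"
proof -
  note finite = persistent_finite_vertices[OF assms(1)]
    and X = persistent_X[OF assms(1)] and bar = persistent_bar[OF assms(1)]
  have ab: "{a, b} \<in> E" and ac: "{a, c} \<in> E"
    using assms(6) by (auto simp: nbhd_def)
  have gap: "\<nexists>x. {a, x} \<in> E \<and> b < x \<and> x < c"
    using assms(7) by (auto simp: closed_nbhd_def nbhd_def)
  have "a \<noteq> b" "a \<noteq> c"
    using persistent_edge_in_range(3)[OF assms(1)] ab ac by blast+
  moreover have "\<not> (b < a \<and> a < c)"
    using assms(7) by (simp add: closed_nbhd_def)
  ultimately consider "a < b" | "c < a"
    using \<open>b < c\<close> by linarith
  then show ?thesis
  proof cases
    case 1
    from edge_across_neighbourhood_gap[OF finite X bar this \<open>b < c\<close> ab ac gap]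
    show ?thesis .
  next
    case 2
    \<comment> \<open>Both properties survive reversal of the order, which swaps the roles of \<open>b\<close> and \<open>c\<close>.\<close>
    have "{c, b} \<in> E"
    proof (rule linorder.edge_across_neighbourhood_gap[OF dual_linorder finite])
      show "{p, s} \<in> E" if "q < p" "r < q" "s < r" "{p, r} \<in> E" "{q, s} \<in> E" for p q r s :: nat
        using X[of s r q p] that by (simp add: insert_commute)
      show "\<exists>x. x < u \<and> v < x \<and> {u, x} \<in> E \<and> {x, v} \<in> E"
        if "{u, v} \<in> E" "w < u" "v < w" for u v w :: nat
        using bar[of v u w] that by (auto simp: insert_commute)
    qed (use 2 \<open>b < c\<close> ac ab gap in auto)
    then show ?thesis
      by (simp add: insert_commute)
  qed
qed

end
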